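(* Let $G=(V,E)$ be an unweighted undirected graph, let $S\subseteq V$ be non-empty, let $u,v\in V$ and let $P(u,v)$ be a shortest path between $u$ and $v$ in $G$. If $P(u,v)$ is not contained in $G_S$, then $h_S(u)+h_S(v)\le d_G(u,v)+1$.
   Context: All edges have weight $1$. $d_G(u,v)$ is the shortest-path distance in $G$; $h_S(u)=\min_{s\in S}d_G(u,s)$. For $v\in V$, $E_S(v)$ is the set of edges incident to $v$ whose weight is at most $h_S(v)$; $E_S=\bigcup_{v\in V}E_S(v)$ and $G_S=(V,E_S)$. "$P(u,v)$ is contained in $G_S$" means every edge of $P(u,v)$ is in $E_S$. *)

theory Defs
  imports Main "HOL-Library.Extended_Nat"
begin

definition graph :: "'a set \<Rightarrow> 'a set set \<Rightarrow> bool" where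
  "graph V E \<longleftrightarrow> (\<forall>e\<in>E. \<exists>x y. e = {x, y} \<and> x \<noteq> y \<and> x \<in> V \<and> y \<in> V)"

definition weight :: "'a set \<Rightarrow> enat" where
  "weight e = 1"

definition is_path :: "'a set \<Rightarrow> 'a set set \<Rightarrow> 'a list \<Rightarrow> 'a \<Rightarrow> 'a \<Rightarrow> bool" where
  "is_path V F p u v \<longleftrightarrow> p \<noteq> [] \<and> hd p = u \<and> last p = v \<and> set p \<subseteq> V \<and>
     (\<forall>i. Suc i < length p \<longrightarrow> {p ! i, p ! Suc i} \<in> F)"

definition path_length :: "'a list \<Rightarrow> enat" where
  "path_length p = (\<Sum>i<length p - 1. weight {p ! i, p ! Suc i})"

definition dist :: "'a set \<Rightarrow> 'a set set \<Rightarrow> 'a \<Rightarrow> 'a \<Rightarrow> enat" where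
  "dist V E u v = (INF p \<in> {p. is_path V E p u v}. path_length p)"

definition is_shortest_path :: "'a set \<Rightarrow> 'a set set \<Rightarrow> 'a list \<Rightarrow> 'a \<Rightarrow> 'a \<Rightarrow> bool" where
  "is_shortest_path V E p u v \<longleftrightarrow> is_path V E p u v \<and> path_length p = dist V E u v"

definition hS :: "'a set \<Rightarrow> 'a set set \<Rightarrow> 'a set \<Rightarrow> 'a \<Rightarrow> enat" where
  "hS V E S u = (INF s \<in> S. dist V E u s)"

definition ES_at :: "'a set \<Rightarrow> 'a set set \<Rightarrow> 'a set \<Rightarrow> 'a \<Rightarrow> 'a set set" where
  "ES_at V E S v = {e \<in> E. v \<in> e \<and> weight e \<le> hS V E S v}"

definition ES :: "'a set \<Rightarrow> 'a set set \<Rightarrow> 'a set \<Rightarrow> 'a set set" where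
  "ES V E S = (\<Union>v\<in>V. ES_at V E S v)"

definition contained_in :: "'a list \<Rightarrow> 'a set set \<Rightarrow> bool" where
  "contained_in p F \<longleftrightarrow> (\<forall>i. Suc i < length p \<longrightarrow> {p ! i, p ! Suc i} \<in> F)"

end

theory Submission
  imports Defs
begin

text \<open>With unit weights an edge {a, b} lies outside E_S only if h_S(a) < 1 and h_S(b) < 1,
  i.e. a and b both belong to S. If {a, b} = {P!i, P!(i+1)} on the shortest path P, then
  h_S(u) \<le> d(u, a) \<le> i and h_S(v) \<le> d(b, v) \<le> d(u, v) - i - 1, so in fact
  h_S(u) + h_S(v) \<le> d(u, v) - 1.\<close>

lemma path_length_eq: "path_length p = enat (length p - 1)"
  by (simp add: path_length_def weight_def of_nat_eq_enat)

lemma dist_le_path_length: "is_path V E p x y \<Longrightarrow> dist V E x y \<le> path_length p"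
  unfolding dist_def by (rule INF_lower) simp

lemma hS_le_dist: "s \<in> S \<Longrightarrow> hS V E S x \<le> dist V E x s"
  unfolding hS_def by (rule INF_lower)

lemma enat_INF_attained:
  fixes f :: "'b \<Rightarrow> enat"
  assumes "A \<noteq> {}"
  obtains x where "x \<in> A" "(INF x\<in>A. f x) = f x"
proof -
  have "(INF x\<in>A. f x) \<in> f ` A"
    using assms by (simp add: Inf_enat_def) (metis LeastI image_is_empty ex_in_conv)
  then show ?thesis
    using that by auto
qed

lemma dist_eq_0_imp_eq:
  assumes "dist V E x y = 0"
  shows "x = y"
proof -
  have "{p. is_path V E p x y} \<noteq> {}"
  proof
    assume "{p. is_path V E p x y} = {}"
    then have "dist V E x y = \<infinity>"
      by (simp add: dist_def top_enat_def)
    with assms show False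
      by simp
  qed
  then obtain p where p: "is_path V E p x y" "dist V E x y = path_length p"
    unfolding dist_def by (metis (no_types) enat_INF_attained mem_Collect_eq)
  with assms have "length p = 1"
    by (cases p) (auto simp: path_length_eq zero_enat_def is_path_def)
  then have "hd p = last p"
    by (cases p) auto
  with p(1) show ?thesis
    unfolding is_path_def by metis
qed

lemma hS_eq_0_imp_mem:
  assumes "hS V E S x = 0"
  shows "x \<in> S"
proof -
  have "S \<noteq> {}"
  proof
    assume "S = {}"
    then have "hS V E S x = \<infinity>"
      by (simp add: hS_def top_enat_def)
    with assms show False
      by simp
  qed
  then obtain s where s: "s \<in> S" "hS V E S x = dist V E x s"
    unfolding hS_def by (rule enat_INF_attained)
  with assms have "x = s"
    using dist_eq_0_imp_eq by simp
  with s(1) show ?thesis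
    by simp
qed

lemma edge_notin_ES_imp_mem:
  assumes "{a, b} \<in> E" "a \<in> V" "{a, b} \<notin> ES V E S"
  shows "a \<in> S"
proof -
  have "\<not> 1 \<le> hS V E S a"
    using assms by (auto simp: ES_def ES_at_def weight_def)
  then have "hS V E S a = 0"
    using ileI1[of 0 "hS V E S a"] by (auto simp: one_eSuc)
  then show ?thesis
    by (rule hS_eq_0_imp_mem)
qed

lemma is_path_take:
  assumes "is_path V F p x y" "i < length p"
  shows "is_path V F (take (Suc i) p) x (p ! i)"
  using assms unfolding is_path_def
  by (auto simp: hd_take last_conv_nth dest: in_set_takeD)

lemma is_path_drop:
  assumes "is_path V F p x y" "i < length p"
  shows "is_path V F (drop i p) (p ! i) y"
  using assms unfolding is_path_def
  by (auto simp: hd_drop_conv_nth dest: in_set_dropD)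

lemma is_path_rev:
  assumes "is_path V F p x y"
  shows "is_path V F (rev p) y x"
proof -
  have "{rev p ! j, rev p ! Suc j} \<in> F" if "Suc j < length p" for j
  proof -
    have "{p ! (length p - Suc (Suc j)), p ! Suc (length p - Suc (Suc j))} \<in> F"
      using assms that unfolding is_path_def by auto
    moreover have "Suc (length p - Suc (Suc j)) = length p - Suc j"
      using that by simp
    ultimately show ?thesis
      using that by (simp add: rev_nth insert_commute)
  qed
  then show ?thesis
    using assms unfolding is_path_def by (auto simp: hd_rev last_rev)
qed

lemma dist_to_path_vertex_le:
  assumes "is_path V E p x y" "i < length p"
  shows "dist V E x (p ! i) \<le> enat i"
  using dist_le_path_length[OF is_path_take[OF assms]] assms(2) by (simp add: path_length_eq)

lemma dist_from_path_vertex_le: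
  assumes "is_path V E p x y" "i < length p"
  shows "dist V E y (p ! i) \<le> enat (length p - Suc i)"
  using dist_le_path_length[OF is_path_rev[OF is_path_drop[OF assms]]] by (simp add: path_length_eq)

theorem lemma23:
  fixes V :: "'a set" and E :: "'a set set" and S :: "'a set" and u v :: 'a and P :: "'a list"
  assumes "graph V E"
    and "S \<subseteq> V" and "S \<noteq> {}"
    and "u \<in> V" and "v \<in> V"
    and "is_shortest_path V E P u v"
    and "\<not> contained_in P (ES V E S)"
  shows "hS V E S u + hS V E S v \<le> dist V E u v + 1"
proof -
  have P: "is_path V E P u v" and dist_uv: "dist V E u v = enat (length P - 1)"
    using assms(6) by (auto simp: is_shortest_path_def path_length_eq)
  obtain i where i: "Suc i < length P" and edge: "{P ! i, P ! Suc i} \<notin> ES V E S"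
    using assms(7) unfolding contained_in_def by auto
  have in_E: "{P ! i, P ! Suc i} \<in> E" and in_V: "P ! i \<in> V" "P ! Suc i \<in> V"
    using P i by (auto simp: is_path_def)
  have "P ! i \<in> S"
    using edge_notin_ES_imp_mem[OF in_E in_V(1) edge] .
  moreover have "P ! Suc i \<in> S"
    using edge_notin_ES_imp_mem[of "P ! Suc i" "P ! i"] in_E in_V(2) edge
    by (simp add: insert_commute)
  ultimately have "hS V E S u \<le> enat i" "hS V E S v \<le> enat (length P - Suc (Suc i))"
    using order_trans[OF hS_le_dist dist_to_path_vertex_le[OF P]]
      order_trans[OF hS_le_dist dist_from_path_vertex_le[OF P i]] i
    by simp_all
  then have "hS V E S u + hS V E S v \<le> enat i + enat (length P - Suc (Suc i))"
    by (rule add_mono)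
  also have "\<dots> \<le> dist V E u v + 1"
    using i by (simp add: dist_uv one_enat_def)
  finally show ?thesis .
qed

end
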